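(* Let $f_1,\dots,f_n:\mathbb{R}^d\to\mathbb{R}$ be such that each $f_i$ is $L_i$-smooth and $\mu_i$-strongly convex with minimizer $x_i$. Let $\alpha_i\in(0,1)$, $T_i(x) = \alpha_i x+(1-\alpha_i)x_i$, $\tilde f(x) = \frac{1}{n}\sum_i f_i(T_i(x))$ with minimizer $x^*$, $L_\alpha = \frac{1}{n}\sum_i\alpha_i^2L_i$, $\mu_\alpha = \frac{1}{n}\sum_i\alpha_i^2\mu_i$. Let $\omega_i\geq0$ and $\beta_i\in(0,\frac{1}{\omega_i+1}]$. Consider DIANA applied to $\tilde f$: given $x^0, h_1^0,\dots,h_n^0\in\mathbb{R}^d$, for $k\geq0$ set $\Delta_i^k = \alpha_i\nabla f_i(T_i(x^k)) - h_i^k$, $\hat\Delta_i^k = \mathcal{C}_i^k(\Delta_i^k)$, $h_i^{k+1} = h_i^k + \beta_i\hat\Delta_i^k$, $g^k = \frac{1}{n}\sum_i(h_i^k + \hat\Delta_i^k)$, $x^{k+1} = x^k - \gamma g^k$, where $\mathcal{C}_i^k\in\mathbb{B}^d(\omega_i)$ are drawn independently across $i$ and $k$. Let $\sigma_k^2 = \frac{1}{n}\sum_i\omega_i\|h_i^k - \alpha_i\nabla f_i(T_i(x^* ))\|^2$ and $\mathcal{D}^k = \|x^k - x^*\|^2 + \frac{4}{n\min_i\beta_i}\gamma^2\sigma_k^2$. If \[ 0<\gamma\leq\left(L_\alpha + \frac{2\max_i\{L_i\alpha_i^2\omega_i\}}{n} + \frac{4\max_i\{\beta_i\omega_iL_i\alpha_i^2\}}{n\min_i\beta_i}\right)^{-1},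 \] then for all $k\geq0$, $\mathbb{E}[\mathcal{D}^k]\leq\max\left\{(1-\gamma\mu_\alpha)^k, \left(1 - \tfrac12\min_i\beta_i\right)^k\right\}\mathcal{D}^0$.
   Context: A (random) operator $\mathcal{C}$ belongs to $\mathbb{B}^d(\omega)$ if $\mathbb{E}[\mathcal{C}(x)] = x$ and $\mathbb{E}\|\mathcal{C}(x)-x\|^2\leq\omega\|x\|^2$ for all $x$. A differentiable $g$ is $L$-smooth if $\|\nabla g(x)-\nabla g(y)\|\leq L\|x-y\|$, and $\mu$-strongly convex if $g(x)\geq g(y)+\langle\nabla g(y),x-y\rangle+\frac{\mu}{2}\|x-y\|^2$, for all $x,y$. *)

theory Defs
  imports "HOL-Probability.Probability"
begin

definition L_smooth :: "('a::euclidean_space \<Rightarrow> real) \<Rightarrow> ('a \<Rightarrow> 'a) \<Rightarrow> real \<Rightarrow> bool" where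
  "L_smooth f gf L \<longleftrightarrow> (\<forall>x. GDERIV f x :> gf x) \<and> (\<forall>x y. norm (gf x - gf y) \<le> L * norm (x - y))"

definition strongly_convex :: "('a::euclidean_space \<Rightarrow> real) \<Rightarrow> ('a \<Rightarrow> 'a) \<Rightarrow> real \<Rightarrow> bool" where
  "strongly_convex f gf \<mu> \<longleftrightarrow> (\<forall>x. GDERIV f x :> gf x) \<and>
     (\<forall>x y. f x \<ge> f y + inner (gf y) (x - y) + \<mu> / 2 * (norm (x - y))\<^sup>2)"

text \<open>Class B^d(omega) of unbiased random compressors. The random operator is
  b \<mapsto> C b, with b distributed according to the probability space N.\<close>

definition unbiased_compressor :: "'b measure \<Rightarrow> ('b \<Rightarrow> 'a::euclidean_space \<Rightarrow> 'a) \<Rightarrow> real \<Rightarrow> bool" where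
  "unbiased_compressor N C \<omega> \<longleftrightarrow>
     (\<forall>x. integrable N (\<lambda>b. C b x) \<and> (\<integral>b. C b x \<partial>N) = x \<and>
          (\<integral>\<^sup>+ b. ennreal ((norm (C b x - x))\<^sup>2) \<partial>N) \<le> ennreal (\<omega> * (norm x)\<^sup>2))"

text \<open>DIANA iterates (x^k, h^k) for the objective (1/n) sum_i f_i(T_i x), where
  gf i is the gradient of f_i, T_i x = alpha_i x + (1 - alpha_i) xm_i,
  and the compressor C_i^k is C k i (w (k,i)) for the sample w.\<close>

primrec diana :: "nat \<Rightarrow> (nat \<Rightarrow> 'a \<Rightarrow> 'a) \<Rightarrow> (nat \<Rightarrow> real) \<Rightarrow> (nat \<Rightarrow> 'a) \<Rightarrow> (nat \<Rightarrow> real)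
   \<Rightarrow> real \<Rightarrow> (nat \<Rightarrow> nat \<Rightarrow> 'b \<Rightarrow> 'a \<Rightarrow> 'a) \<Rightarrow> 'a::euclidean_space \<Rightarrow> (nat \<Rightarrow> 'a)
   \<Rightarrow> (nat \<times> nat \<Rightarrow> 'b) \<Rightarrow> nat \<Rightarrow> 'a \<times> (nat \<Rightarrow> 'a)" where
  "diana n gf \<alpha> xm \<beta> \<gamma> C x0 h0 w 0 = (x0, h0)"
| "diana n gf \<alpha> xm \<beta> \<gamma> C x0 h0 w (Suc k) =
     (let (x, h) = diana n gf \<alpha> xm \<beta> \<gamma> C x0 h0 w k;
          \<Delta> = (\<lambda>i. \<alpha> i *\<^sub>R gf i (\<alpha> i *\<^sub>R x + (1 - \<alpha> i) *\<^sub>R xm i) - h i);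
          \<Delta>h = (\<lambda>i. C k i (w (k, i)) (\<Delta> i));
          g = (1 / real n) *\<^sub>R (\<Sum>i<n. h i + \<Delta>h i)
      in (x - \<gamma> *\<^sub>R g, (\<lambda>i. h i + \<beta> i *\<^sub>R \<Delta>h i)))"

end

theory Submission
  imports Defs
begin

text \<open>Since T i x = \<alpha> i x + (1 - \<alpha> i) xm i scales curvature by (\<alpha> i)^2, the objective
  (1/n) \<Sum>i. f i (T i x) is L_avg-smooth and \<mu>_avg-strongly convex. Given the current state,
  the compression errors of one round are independent and unbiased, so the expected next
  potential is an explicit deterministic quantity: the squared distance after an exact gradient
  step plus the compression variances \<omega> i |\<Delta> i|^2. The gradient step contracts |x - xstar|^2
  by 1 - \<gamma> \<mu>_avg at the price of a Bregman divergence of the objective, the shift update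
  contracts \<sigma>^2 by 1 - \<beta>_min / 2 up to Bregman divergences of the f i \<circ> T i (by
  co-coercivity), and the step size condition makes all Bregman terms cancel. Hence each round
  contracts the expected potential by the factor max (1 - \<gamma> \<mu>_avg) (1 - \<beta>_min / 2).\<close>

section \<open>Smooth and strongly convex functions\<close>

lemma GDERIV_affine_compose:
  assumes "GDERIV f (a *\<^sub>R x + c) :> g"
  shows "GDERIV (\<lambda>x. f (a *\<^sub>R x + c)) x :> a *\<^sub>R g"
proof -
  have "((\<lambda>x. a *\<^sub>R x + c) has_derivative (\<lambda>h. a *\<^sub>R h)) (at x)"
    by (auto intro!: derivative_eq_intros)
  from has_derivative_compose[OF this assms[unfolded gderiv_def]] show ?thesis
    unfolding gderiv_def by (simp add: ac_simps)
qed

lemma GDERIV_weighted_sum: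
  assumes "\<And>i. i \<in> I \<Longrightarrow> GDERIV (f i) x :> g i"
  shows "GDERIV (\<lambda>x. \<Sum>i\<in>I. c i * f i x) x :> (\<Sum>i\<in>I. c i *\<^sub>R g i)"
  using assms unfolding gderiv_def
  by (auto intro!: derivative_eq_intros simp: inner_sum_right)

lemma GDERIV_has_real_derivative_along_line:
  assumes "GDERIV f (x + t *\<^sub>R d) :> g"
  shows "((\<lambda>t. f (x + t *\<^sub>R d)) has_real_derivative inner g d) (at t)"
proof -
  have "((\<lambda>t. x + t *\<^sub>R d) has_derivative (\<lambda>s. s *\<^sub>R d)) (at t)"
    by (auto intro!: derivative_eq_intros)
  from has_derivative_compose[OF this assms[unfolded gderiv_def]]
  show ?thesis
    unfolding has_field_derivative_def
    by (rule has_derivative_eq_rhs) (auto simp: fun_eq_iff inner_commute)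
qed

lemma L_smooth_descent:
  assumes "L_smooth f gf L"
  shows "f (x + d) \<le> f x + inner (gf x) d + L / 2 * (norm d)\<^sup>2"
proof -
  have gd: "\<And>x. GDERIV f x :> gf x" and lip: "\<And>x y. norm (gf x - gf y) \<le> L * norm (x - y)"
    using assms unfolding L_smooth_def by auto
  define g where "g t = f (x + t *\<^sub>R d) - t * inner (gf x) d - L / 2 * t\<^sup>2 * (norm d)\<^sup>2" for t
  define g' where "g' t = inner (gf (x + t *\<^sub>R d) - gf x) d - L * t * (norm d)\<^sup>2" for t
  have "(g has_real_derivative g' t) (at t)" for t
    unfolding g_def g'_def inner_diff_left
    by (auto intro!: derivative_eq_intros GDERIV_has_real_derivative_along_line[OF gd])
  then obtain s where s: "0 < s" "s < 1" "g 1 - g 0 = g' s"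
    using MVT2[of 0 1 g g'] by auto
  have "inner (gf (x + s *\<^sub>R d) - gf x) d \<le> norm (gf (x + s *\<^sub>R d) - gf x) * norm d"
    by (rule norm_cauchy_schwarz)
  also have "\<dots> \<le> L * norm (s *\<^sub>R d) * norm d"
    using lip[of "x + s *\<^sub>R d" x] by (simp add: mult_right_mono)
  also have "\<dots> = L * s * (norm d)\<^sup>2"
    using s by (simp add: power2_eq_square)
  finally have "g 1 \<le> g 0"
    using s by (simp add: g'_def)
  then show ?thesis
    by (simp add: g_def)
qed

lemma strongly_convex_le_L_smooth:
  fixes f :: "'a::euclidean_space \<Rightarrow> real"
  assumes "L_smooth f gf L" and "strongly_convex f gf \<mu>"
  shows "\<mu> \<le> L"
proof -
  obtain d :: 'a where d: "norm d = 1"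
    using vector_choose_size[of 1] by auto
  have "f (0 + d) \<le> f 0 + inner (gf 0) d + L / 2 * (norm d)\<^sup>2"
    using assms(1) by (rule L_smooth_descent)
  moreover have "f d \<ge> f 0 + inner (gf 0) (d - 0) + \<mu> / 2 * (norm (d - 0))\<^sup>2"
    using assms(2) unfolding strongly_convex_def by blast
  ultimately show ?thesis
    using d by simp
qed

text \<open>Co-coercivity: convexity at y, compared with the descent inequality at x along
  the step -(gf x - gf y)/L.\<close>

lemma L_smooth_cocoercive:
  assumes smooth: "L_smooth f gf L" and conv: "strongly_convex f gf \<mu>"
    and "0 \<le> \<mu>" and L: "0 < L"
  shows "(norm (gf x - gf y))\<^sup>2 \<le> 2 * L * (f x - f y - inner (gf y) (x - y))"
proof -
  define w where "w = gf x - gf y"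
  define d where "d = - (1 / L) *\<^sub>R w"
  have "f (x + d) \<le> f x + inner (gf x) d + L / 2 * (norm d)\<^sup>2"
    using smooth by (rule L_smooth_descent)
  moreover have "f (x + d) \<ge> f y + inner (gf y) (x + d - y)"
  proof -
    have "f (x + d) \<ge> f y + inner (gf y) (x + d - y) + \<mu> / 2 * (norm (x + d - y))\<^sup>2"
      using conv unfolding strongly_convex_def by blast
    moreover have "0 \<le> \<mu> / 2 * (norm (x + d - y))\<^sup>2"
      using \<open>0 \<le> \<mu>\<close> by simp
    ultimately show ?thesis
      by linarith
  qed
  moreover have "inner (gf x) d - inner (gf y) (x + d - y) = inner w d - inner (gf y) (x - y)"
    by (simp add: w_def algebra_simps inner_diff_left inner_diff_right inner_add_right)
  moreover have "inner w d = - (norm w)\<^sup>2 / L" and "(norm d)\<^sup>2 = (norm w)\<^sup>2 / L\<^sup>2"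
    by (simp_all add: d_def power2_norm_eq_inner power_divide)
  then have "inner w d + L / 2 * (norm d)\<^sup>2 = - (norm w)\<^sup>2 / (2 * L)"
    using L by (simp add: power2_eq_square field_simps)
  ultimately have "(norm w)\<^sup>2 / (2 * L) \<le> f x - f y - inner (gf y) (x - y)"
    by linarith
  then show ?thesis
    using L by (simp add: w_def field_simps)
qed

lemma GDERIV_zero_at_minimum:
  assumes "GDERIV f x :> g" and "\<And>y. f x \<le> f y"
  shows "g = 0"
proof -
  have "(\<lambda>h. inner h g) = (\<lambda>h. 0)"
    using assms unfolding gderiv_def by (intro differential_zero_maxmin[of x UNIV]) auto
  then have "inner g g = 0"
    by meson
  then show ?thesis
    by simp
qed

lemma L_smooth_affine_compose:
  assumes "L_smooth f gf L"
  shows "L_smooth (\<lambda>x. f (a *\<^sub>R x + c)) (\<lambda>x. a *\<^sub>R gf (a *\<^sub>R x + c)) (a\<^sup>2 * L)"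
  unfolding L_smooth_def
proof (intro conjI allI)
  fix x y
  show "GDERIV (\<lambda>x. f (a *\<^sub>R x + c)) x :> a *\<^sub>R gf (a *\<^sub>R x + c)"
    using assms unfolding L_smooth_def by (blast intro: GDERIV_affine_compose)
  have "(a *\<^sub>R x + c) - (a *\<^sub>R y + c) = a *\<^sub>R (x - y)"
    by (simp add: algebra_simps)
  moreover have "norm (gf (a *\<^sub>R x + c) - gf (a *\<^sub>R y + c)) \<le> L * norm ((a *\<^sub>R x + c) - (a *\<^sub>R y + c))"
    using assms unfolding L_smooth_def by blast
  ultimately have "norm (gf (a *\<^sub>R x + c) - gf (a *\<^sub>R y + c)) \<le> L * norm (a *\<^sub>R (x - y))"
    by simp
  then have "\<bar>a\<bar> * norm (gf (a *\<^sub>R x + c) - gf (a *\<^sub>R y + c)) \<le> \<bar>a\<bar> * (L * (\<bar>a\<bar> * norm (x - y)))"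
    by (intro mult_left_mono) auto
  also have "\<dots> = a\<^sup>2 * L * norm (x - y)"
    by (simp add: power2_eq_square abs_mult_self_eq)
  finally show "norm (a *\<^sub>R gf (a *\<^sub>R x + c) - a *\<^sub>R gf (a *\<^sub>R y + c)) \<le> a\<^sup>2 * L * norm (x - y)"
    by (simp add: power2_eq_square flip: scaleR_right_diff_distrib)
qed

lemma strongly_convex_affine_compose:
  assumes "strongly_convex f gf \<mu>"
  shows "strongly_convex (\<lambda>x. f (a *\<^sub>R x + c)) (\<lambda>x. a *\<^sub>R gf (a *\<^sub>R x + c)) (a\<^sup>2 * \<mu>)"
  unfolding strongly_convex_def
proof (intro conjI allI)
  fix x y
  show "GDERIV (\<lambda>x. f (a *\<^sub>R x + c)) x :> a *\<^sub>R gf (a *\<^sub>R x + c)"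
    using assms unfolding strongly_convex_def by (blast intro: GDERIV_affine_compose)
  have "(a *\<^sub>R x + c) - (a *\<^sub>R y + c) = a *\<^sub>R (x - y)"
    by (simp add: algebra_simps)
  moreover have "f (a *\<^sub>R x + c) \<ge> f (a *\<^sub>R y + c)
      + inner (gf (a *\<^sub>R y + c)) ((a *\<^sub>R x + c) - (a *\<^sub>R y + c))
      + \<mu> / 2 * (norm ((a *\<^sub>R x + c) - (a *\<^sub>R y + c)))\<^sup>2"
    using assms unfolding strongly_convex_def by blast
  ultimately have "f (a *\<^sub>R x + c) \<ge> f (a *\<^sub>R y + c) + inner (gf (a *\<^sub>R y + c)) (a *\<^sub>R (x - y))
      + \<mu> / 2 * (norm (a *\<^sub>R (x - y)))\<^sup>2"
    by simp
  then show "f (a *\<^sub>R x + c) \<ge> f (a *\<^sub>R y + c) + inner (a *\<^sub>R gf (a *\<^sub>R y + c)) (x - y)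
      + a\<^sup>2 * \<mu> / 2 * (norm (x - y))\<^sup>2"
    by (simp add: power_mult_distrib mult_ac)
qed

lemma L_smooth_weighted_sum:
  assumes "\<And>i. i \<in> I \<Longrightarrow> L_smooth (f i) (gf i) (L i)" and "\<And>i. i \<in> I \<Longrightarrow> 0 \<le> c i"
  shows "L_smooth (\<lambda>x. \<Sum>i\<in>I. c i * f i x) (\<lambda>x. \<Sum>i\<in>I. c i *\<^sub>R gf i x) (\<Sum>i\<in>I. c i * L i)"
  unfolding L_smooth_def
proof (intro conjI allI)
  fix x y
  show "GDERIV (\<lambda>x. \<Sum>i\<in>I. c i * f i x) x :> (\<Sum>i\<in>I. c i *\<^sub>R gf i x)"
    using assms(1) unfolding L_smooth_def by (intro GDERIV_weighted_sum) auto
  have "norm ((\<Sum>i\<in>I. c i *\<^sub>R gf i x) - (\<Sum>i\<in>I. c i *\<^sub>R gf i y))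
      = norm (\<Sum>i\<in>I. c i *\<^sub>R (gf i x - gf i y))"
    by (simp add: sum_subtractf scaleR_right_diff_distrib)
  also have "\<dots> \<le> (\<Sum>i\<in>I. norm (c i *\<^sub>R (gf i x - gf i y)))"
    by (rule norm_sum)
  also have "\<dots> = (\<Sum>i\<in>I. c i * norm (gf i x - gf i y))"
    using assms(2) by (intro sum.cong) auto
  also have "\<dots> \<le> (\<Sum>i\<in>I. c i * (L i * norm (x - y)))"
    using assms unfolding L_smooth_def by (intro sum_mono mult_left_mono) auto
  finally show "norm ((\<Sum>i\<in>I. c i *\<^sub>R gf i x) - (\<Sum>i\<in>I. c i *\<^sub>R gf i y))
      \<le> (\<Sum>i\<in>I. c i * L i) * norm (x - y)"
    by (simp add: sum_distrib_right mult.assoc)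
qed

lemma strongly_convex_weighted_sum:
  assumes "\<And>i. i \<in> I \<Longrightarrow> strongly_convex (f i) (gf i) (\<mu> i)" and "\<And>i. i \<in> I \<Longrightarrow> 0 \<le> c i"
  shows "strongly_convex (\<lambda>x. \<Sum>i\<in>I. c i * f i x) (\<lambda>x. \<Sum>i\<in>I. c i *\<^sub>R gf i x) (\<Sum>i\<in>I. c i * \<mu> i)"
  unfolding strongly_convex_def
proof (intro conjI allI)
  fix x y
  show "GDERIV (\<lambda>x. \<Sum>i\<in>I. c i * f i x) x :> (\<Sum>i\<in>I. c i *\<^sub>R gf i x)"
    using assms(1) unfolding strongly_convex_def by (intro GDERIV_weighted_sum) auto
  have "(\<Sum>i\<in>I. c i * (f i y + inner (gf i y) (x - y) + \<mu> i / 2 * (norm (x - y))\<^sup>2))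
      \<le> (\<Sum>i\<in>I. c i * f i x)"
    using assms unfolding strongly_convex_def by (intro sum_mono mult_left_mono) auto
  then show "(\<Sum>i\<in>I. c i * f i x) \<ge> (\<Sum>i\<in>I. c i * f i y) + inner (\<Sum>i\<in>I. c i *\<^sub>R gf i y) (x - y)
      + (\<Sum>i\<in>I. c i * \<mu> i) / 2 * (norm (x - y))\<^sup>2"
    by (simp add: distrib_left sum.distrib inner_sum_left sum_distrib_right sum_divide_distrib
        mult.assoc)
qed

lemma norm_add_scaleR_sq:
  "(norm (u + t *\<^sub>R d))\<^sup>2 = (norm u)\<^sup>2 + 2 * t * inner u d + t\<^sup>2 * (norm (d :: 'a::real_inner))\<^sup>2"
proof -
  have "(norm (u + t *\<^sub>R d))\<^sup>2 = inner (u + t *\<^sub>R d) (u + t *\<^sub>R d)"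
    by (rule power2_norm_eq_inner)
  also have "\<dots> = inner u u + 2 * t * inner u d + t\<^sup>2 * inner d d"
    by (simp add: inner_add_left inner_add_right inner_commute power2_eq_square algebra_simps)
  finally show ?thesis
    by (simp add: power2_norm_eq_inner)
qed

lemma gradient_step_bound:
  assumes smooth: "L_smooth F G L" and conv: "strongly_convex F G \<mu>"
    and "0 \<le> \<mu>" "0 < L" and stat: "G xs = 0" and "0 \<le> \<gamma>"
  shows "(norm (x - xs - \<gamma> *\<^sub>R G x))\<^sup>2
    \<le> (1 - \<gamma> * \<mu>) * (norm (x - xs))\<^sup>2 - 2 * \<gamma> * (1 - \<gamma> * L) * (F x - F xs)"
proof -
  have "F xs \<ge> F x + inner (G x) (xs - x) + \<mu> / 2 * (norm (xs - x))\<^sup>2"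
    using conv unfolding strongly_convex_def by blast
  then have "inner (G x) (x - xs) \<ge> F x - F xs + \<mu> / 2 * (norm (x - xs))\<^sup>2"
    by (simp add: norm_minus_commute inner_diff_right)
  then have "2 * \<gamma> * inner (G x) (x - xs) \<ge> 2 * \<gamma> * (F x - F xs + \<mu> / 2 * (norm (x - xs))\<^sup>2)"
    using \<open>0 \<le> \<gamma>\<close> by (intro mult_left_mono) auto
  moreover have "(norm (G x))\<^sup>2 \<le> 2 * L * (F x - F xs)"
    using L_smooth_cocoercive[OF smooth conv \<open>0 \<le> \<mu>\<close> \<open>0 < L\<close>, of x xs] stat by simp
  then have "\<gamma>\<^sup>2 * (norm (G x))\<^sup>2 \<le> \<gamma>\<^sup>2 * (2 * L * (F x - F xs))"
    by (intro mult_left_mono) auto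
  moreover have "(norm (x - xs - \<gamma> *\<^sub>R G x))\<^sup>2
      = (norm (x - xs))\<^sup>2 - 2 * \<gamma> * inner (G x) (x - xs) + \<gamma>\<^sup>2 * (norm (G x))\<^sup>2"
    using norm_add_scaleR_sq[of "x - xs" "- \<gamma>" "G x"] by (simp add: inner_commute)
  ultimately show ?thesis
    by (simp add: algebra_simps power2_eq_square)
qed

lemma norm_diff_sq_le: "(norm (u - v))\<^sup>2 \<le> 2 * (norm u)\<^sup>2 + 2 * (norm (v :: 'a::real_inner))\<^sup>2"
proof -
  have "(norm (u - v))\<^sup>2 + (norm (u + v))\<^sup>2 = 2 * (norm u)\<^sup>2 + 2 * (norm v)\<^sup>2"
    by (simp add: power2_norm_eq_inner inner_add_left inner_add_right inner_diff_left
        inner_diff_right inner_commute)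
  then show ?thesis
    by (metis le_add_same_cancel1 zero_le_power2)
qed

text \<open>The shift update h + \<beta> C(\<Delta>) of DIANA: its mean moves h a fraction \<beta> towards
  h + \<Delta>, and the step size condition \<beta> (\<omega> + 1) \<le> 1 absorbs the compression noise.\<close>

lemma norm_sq_shift_update_le:
  fixes u d :: "'a::real_inner"
  assumes "0 \<le> \<beta>" and "\<beta> * (\<omega> + 1) \<le> 1"
  shows "(norm (u + \<beta> *\<^sub>R d))\<^sup>2 + \<beta>\<^sup>2 * \<omega> * (norm d)\<^sup>2
    \<le> (1 - \<beta>) * (norm u)\<^sup>2 + \<beta> * (norm (u + d))\<^sup>2"
proof -
  have "\<beta>\<^sup>2 * (\<omega> + 1) * (norm d)\<^sup>2 \<le> \<beta> * (norm d)\<^sup>2"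
    using mult_left_mono[OF assms(2) assms(1)]
    by (intro mult_right_mono) (auto simp: power2_eq_square mult.assoc)
  then show ?thesis
    using norm_add_scaleR_sq[of u \<beta> d] norm_add_scaleR_sq[of u 1 d] by (simp add: algebra_simps)
qed

section \<open>Second moments of unbiased compressions\<close>

lemma nn_integral_norm_sq_add_mean_zero:
  fixes Z :: "'b \<Rightarrow> 'a::euclidean_space"
  assumes "prob_space M" and Z: "integrable M Z" and Z2: "integrable M (\<lambda>y. (norm (Z y))\<^sup>2)"
    and mean: "(\<integral>y. Z y \<partial>M) = 0"
  shows "(\<integral>\<^sup>+y. ennreal ((norm (c + Z y))\<^sup>2) \<partial>M)
    = ennreal ((norm c)\<^sup>2) + (\<integral>\<^sup>+y. ennreal ((norm (Z y))\<^sup>2) \<partial>M)"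
proof -
  interpret prob_space M by fact
  have expand: "(norm (c + Z y))\<^sup>2 = (norm c)\<^sup>2 + 2 * inner c (Z y) + (norm (Z y))\<^sup>2" for y
    using norm_add_scaleR_sq[of c 1 "Z y"] by simp
  have int: "integrable M (\<lambda>y. (norm c)\<^sup>2 + 2 * inner c (Z y) + (norm (Z y))\<^sup>2)"
    using Z Z2 by auto
  have "(\<integral>\<^sup>+y. ennreal ((norm (c + Z y))\<^sup>2) \<partial>M)
      = ennreal (\<integral>y. (norm c)\<^sup>2 + 2 * inner c (Z y) + (norm (Z y))\<^sup>2 \<partial>M)"
    unfolding expand by (rule nn_integral_eq_integral[OF int]) (simp flip: expand)
  also have "(\<integral>y. (norm c)\<^sup>2 + 2 * inner c (Z y) + (norm (Z y))\<^sup>2 \<partial>M)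
      = (norm c)\<^sup>2 + (\<integral>y. (norm (Z y))\<^sup>2 \<partial>M)"
    using Z Z2 mean by (simp add: prob_space)
  also have "ennreal \<dots> = ennreal ((norm c)\<^sup>2) + (\<integral>\<^sup>+y. ennreal ((norm (Z y))\<^sup>2) \<partial>M)"
    by (simp add: ennreal_plus integral_nonneg_AE nn_integral_eq_integral[OF Z2])
  finally show ?thesis .
qed

lemma unbiased_compressor_error:
  assumes M: "prob_space M" and C: "unbiased_compressor M C \<omega>"
  shows "integrable M (\<lambda>b. t *\<^sub>R (C b x - x))"
    and "(\<integral>b. t *\<^sub>R (C b x - x) \<partial>M) = 0"
    and "(\<integral>\<^sup>+b. ennreal ((norm (t *\<^sub>R (C b x - x)))\<^sup>2) \<partial>M) \<le> ennreal (t\<^sup>2 * (\<omega> * (norm x)\<^sup>2))"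
    and "integrable M (\<lambda>b. (norm (t *\<^sub>R (C b x - x)))\<^sup>2)"
proof -
  interpret prob_space M by (rule M)
  have int: "integrable M (\<lambda>b. C b x)" and mean: "(\<integral>b. C b x \<partial>M) = x"
    and var: "(\<integral>\<^sup>+b. ennreal ((norm (C b x - x))\<^sup>2) \<partial>M) \<le> ennreal (\<omega> * (norm x)\<^sup>2)"
    using C unfolding unbiased_compressor_def by auto
  then have [measurable]: "(\<lambda>b. C b x) \<in> borel_measurable M"
    by (simp add: borel_measurable_integrable)
  show "integrable M (\<lambda>b. t *\<^sub>R (C b x - x))"
    using int by simp
  show "(\<integral>b. t *\<^sub>R (C b x - x) \<partial>M) = 0"
    using int mean by (simp add: prob_space)
  have "(\<integral>\<^sup>+b. ennreal ((norm (t *\<^sub>R (C b x - x)))\<^sup>2) \<partial>M)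
      = ennreal (t\<^sup>2) * (\<integral>\<^sup>+b. ennreal ((norm (C b x - x))\<^sup>2) \<partial>M)"
    by (simp add: power_mult_distrib ennreal_mult' nn_integral_cmult flip: nn_integral_cmult)
  also have "\<dots> \<le> ennreal (t\<^sup>2) * ennreal (\<omega> * (norm x)\<^sup>2)"
    using var by (rule mult_left_mono) simp
  finally show bound: "(\<integral>\<^sup>+b. ennreal ((norm (t *\<^sub>R (C b x - x)))\<^sup>2) \<partial>M)
      \<le> ennreal (t\<^sup>2 * (\<omega> * (norm x)\<^sup>2))"
    by (simp add: ennreal_mult')
  show "integrable M (\<lambda>b. (norm (t *\<^sub>R (C b x - x)))\<^sup>2)"
  proof (rule integrableI_bounded)
    show "(\<integral>\<^sup>+b. ennreal (norm ((norm (t *\<^sub>R (C b x - x)))\<^sup>2)) \<partial>M) < \<infinity>"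
      using le_less_trans[OF bound ennreal_less_top] by simp
  qed simp
qed

lemma unbiased_compressor_update_sq:
  assumes M: "prob_space M" and C: "unbiased_compressor M C \<omega>" and "0 \<le> \<omega>"
  shows "(\<integral>\<^sup>+b. ennreal ((norm (u + t *\<^sub>R C b x))\<^sup>2) \<partial>M)
    \<le> ennreal ((norm (u + t *\<^sub>R x))\<^sup>2 + t\<^sup>2 * (\<omega> * (norm x)\<^sup>2))"
proof -
  note err = unbiased_compressor_error[OF M C, of t x]
  have "(\<integral>\<^sup>+b. ennreal ((norm (u + t *\<^sub>R C b x))\<^sup>2) \<partial>M)
      = (\<integral>\<^sup>+b. ennreal ((norm ((u + t *\<^sub>R x) + t *\<^sub>R (C b x - x)))\<^sup>2) \<partial>M)"
    by (rule nn_integral_cong) (simp add: algebra_simps)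
  also have "\<dots> = ennreal ((norm (u + t *\<^sub>R x))\<^sup>2) + (\<integral>\<^sup>+b. ennreal ((norm (t *\<^sub>R (C b x - x)))\<^sup>2) \<partial>M)"
    by (rule nn_integral_norm_sq_add_mean_zero[OF M err(1,4,2)])
  also have "\<dots> \<le> ennreal ((norm (u + t *\<^sub>R x))\<^sup>2) + ennreal (t\<^sup>2 * (\<omega> * (norm x)\<^sup>2))"
    using err(3) by (rule add_left_mono)
  finally show ?thesis
    using \<open>0 \<le> \<omega>\<close> by (simp add: ennreal_plus[symmetric] del: ennreal_plus)
qed

text \<open>Independent mean-zero perturbations are orthogonal, so their second moments add up
  over a product of probability spaces.\<close>

lemma nn_integral_PiM_norm_sq_sum_mean_zero:
  fixes M :: "'i \<Rightarrow> 'b measure" and Z :: "'i \<Rightarrow> 'b \<Rightarrow> 'a::euclidean_space" and \<psi> :: "'i \<Rightarrow> 'b \<Rightarrow> real"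
  assumes M: "\<And>i. prob_space (M i)" and "finite I"
    and "\<And>i. i \<in> I \<Longrightarrow> integrable (M i) (Z i)"
    and "\<And>i. i \<in> I \<Longrightarrow> integrable (M i) (\<lambda>y. (norm (Z i y))\<^sup>2)"
    and "\<And>i. i \<in> I \<Longrightarrow> (\<integral>y. Z i y \<partial>M i) = 0"
    and "\<And>i. i \<in> I \<Longrightarrow> \<psi> i \<in> borel_measurable (M i)"
    and "\<And>i y. i \<in> I \<Longrightarrow> 0 \<le> \<psi> i y"
  shows "(\<integral>\<^sup>+w. ennreal ((norm (a + (\<Sum>i\<in>I. Z i (w i))))\<^sup>2 + (\<Sum>i\<in>I. \<psi> i (w i))) \<partial>PiM I M)
    = ennreal ((norm a)\<^sup>2)
      + (\<Sum>i\<in>I. (\<integral>\<^sup>+y. ennreal ((norm (Z i y))\<^sup>2) \<partial>M i) + (\<integral>\<^sup>+y. ennreal (\<psi> i y) \<partial>M i))"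
  using assms(2-)
proof (induction I arbitrary: a rule: finite_induct)
  case empty
  interpret prob_space "PiM {} M"
    by (rule prob_space_PiM) (rule M)
  show ?case
    by (simp add: emeasure_space_1)
next
  case (insert j I)
  interpret product_prob_space M UNIV
    using M by (simp add: product_prob_space_def product_prob_space_axioms_def
        product_sigma_finite_def prob_space_imp_sigma_finite)
  have Z_meas: "(\<lambda>w. Z i (w i)) \<in> borel_measurable (PiM K M)" if "i \<in> K" "i \<in> insert j I" for i K
    using that insert.prems(1) borel_measurable_integrable
    by (intro measurable_compose[OF measurable_component_singleton]) auto
  have \<psi>_meas: "(\<lambda>w. \<psi> i (w i)) \<in> borel_measurable (PiM K M)" if "i \<in> K" "i \<in> insert j I" for i K
    using that insert.prems(4) by (intro measurable_compose[OF measurable_component_singleton]) auto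
  have sums_meas: "(\<lambda>w. \<Sum>i\<in>K. Z i (w i)) \<in> borel_measurable (PiM K M)"
      "(\<lambda>w. \<Sum>i\<in>K. \<psi> i (w i)) \<in> borel_measurable (PiM K M)" if "K \<subseteq> insert j I" for K
    using that Z_meas \<psi>_meas by (auto intro!: borel_measurable_sum)
  have \<psi>_nonneg: "0 \<le> (\<Sum>i\<in>K. \<psi> i (w i))" if "K \<subseteq> insert j I" for K w
    using that insert.prems(5) by (auto intro!: sum_nonneg)
  define c where "c w = a + (\<Sum>i\<in>I. Z i (w i))" for w
  define K where "K = (\<integral>\<^sup>+y. ennreal ((norm (Z j y))\<^sup>2) \<partial>M j) + (\<integral>\<^sup>+y. ennreal (\<psi> j y) \<partial>M j)"
  have upd: "(\<Sum>i\<in>I. g i (if i = j then y else w i)) = (\<Sum>i\<in>I. g i (w i))"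
    for g :: "'i \<Rightarrow> 'b \<Rightarrow> 'z::comm_monoid_add" and w y
    using insert.hyps(2) by (intro sum.cong) auto
  have Zj: "integrable (M j) (Z j)" "integrable (M j) (\<lambda>y. (norm (Z j y))\<^sup>2)" "(\<integral>y. Z j y \<partial>M j) = 0"
    and \<psi>j: "\<psi> j \<in> borel_measurable (M j)" "\<And>y. 0 \<le> \<psi> j y"
    using insert.prems by auto
  have inner: "(\<integral>\<^sup>+y. ennreal ((norm (a + (\<Sum>i\<in>insert j I. Z i ((w(j := y)) i))))\<^sup>2
        + (\<Sum>i\<in>insert j I. \<psi> i ((w(j := y)) i))) \<partial>M j)
      = ennreal ((norm (c w))\<^sup>2 + (\<Sum>i\<in>I. \<psi> i (w i))) + K" for w
  proof -
    have "(\<integral>\<^sup>+y. ennreal ((norm (a + (\<Sum>i\<in>insert j I. Z i ((w(j := y)) i))))\<^sup>2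
          + (\<Sum>i\<in>insert j I. \<psi> i ((w(j := y)) i))) \<partial>M j)
        = (\<integral>\<^sup>+y. ennreal ((norm (c w + Z j y))\<^sup>2 + \<psi> j y + (\<Sum>i\<in>I. \<psi> i (w i))) \<partial>M j)"
      using insert.hyps by (intro nn_integral_cong) (simp add: upd c_def add_ac)
    also have "\<dots> = (\<integral>\<^sup>+y. ennreal ((norm (c w + Z j y))\<^sup>2) + ennreal (\<psi> j y)
        + ennreal (\<Sum>i\<in>I. \<psi> i (w i)) \<partial>M j)"
      using \<psi>j(2) \<psi>_nonneg[OF subset_insertI, of w] by (intro nn_integral_cong) simp
    also have "\<dots> = ennreal ((norm (c w))\<^sup>2) + K + ennreal (\<Sum>i\<in>I. \<psi> i (w i))"
      using Zj \<psi>j borel_measurable_integrable[OF Zj(1)]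
      by (simp add: nn_integral_add prob_space.emeasure_space_1[OF M] K_def add_ac
          nn_integral_norm_sq_add_mean_zero[OF M])
    also have "\<dots> = ennreal ((norm (c w))\<^sup>2 + (\<Sum>i\<in>I. \<psi> i (w i))) + K"
      using \<psi>_nonneg[OF subset_insertI, of w] by (simp add: add_ac)
    finally show ?thesis .
  qed
  have "(\<integral>\<^sup>+w. ennreal ((norm (a + (\<Sum>i\<in>insert j I. Z i (w i))))\<^sup>2 + (\<Sum>i\<in>insert j I. \<psi> i (w i)))
      \<partial>PiM (insert j I) M)
      = (\<integral>\<^sup>+w. ennreal ((norm (c w))\<^sup>2 + (\<Sum>i\<in>I. \<psi> i (w i))) + K \<partial>PiM I M)"
    using sums_meas[of "insert j I"]
    by (subst product_nn_integral_insert[OF insert.hyps(1,2)]) (simp_all only: inner, simp)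
  also have "\<dots> = (\<integral>\<^sup>+w. ennreal ((norm (c w))\<^sup>2 + (\<Sum>i\<in>I. \<psi> i (w i))) \<partial>PiM I M) + K"
    using sums_meas[OF subset_insertI] unfolding c_def
    by (subst nn_integral_add) (auto simp: prob_space.emeasure_space_1[OF prob_space_PiM[OF M]])
  also have "\<dots> = ennreal ((norm a)\<^sup>2)
      + (\<Sum>i\<in>insert j I. (\<integral>\<^sup>+y. ennreal ((norm (Z i y))\<^sup>2) \<partial>M i) + (\<integral>\<^sup>+y. ennreal (\<psi> i y) \<partial>M i))"
    using insert.IH[of a] insert.prems insert.hyps unfolding c_def K_def by (simp add: add_ac)
  finally show ?case .
qed

section \<open>The shifted objective and the DIANA potential\<close>

lemma mult_le_1_of_le_inverse:
  fixes \<gamma> S :: real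
  assumes "0 < \<gamma>" and "\<gamma> \<le> inverse S"
  shows "\<gamma> * S \<le> 1"
proof -
  have "0 < S"
    using assms by (metis inverse_positive_iff_positive less_le_trans)
  then show ?thesis
    using assms by (simp add: field_simps)
qed

locale shifted_objective =
  fixes n :: nat and f :: "nat \<Rightarrow> 'a::euclidean_space \<Rightarrow> real" and gf :: "nat \<Rightarrow> 'a \<Rightarrow> 'a"
    and L \<mu> \<alpha> :: "nat \<Rightarrow> real" and xm :: "nat \<Rightarrow> 'a"
  assumes n_pos: "0 < n"
    and smooth: "\<And>i. i < n \<Longrightarrow> L_smooth (f i) (gf i) (L i)"
    and sconv: "\<And>i. i < n \<Longrightarrow> strongly_convex (f i) (gf i) (\<mu> i)"
    and mu_pos: "\<And>i. i < n \<Longrightarrow> 0 < \<mu> i"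
    and alpha_pos: "\<And>i. i < n \<Longrightarrow> 0 < \<alpha> i"
begin

definition T :: "nat \<Rightarrow> 'a \<Rightarrow> 'a" where
  "T i x = \<alpha> i *\<^sub>R x + (1 - \<alpha> i) *\<^sub>R xm i"

definition shifted_grad :: "nat \<Rightarrow> 'a \<Rightarrow> 'a" where
  "shifted_grad i x = \<alpha> i *\<^sub>R gf i (T i x)"

definition objective :: "'a \<Rightarrow> real" where
  "objective x = (1 / real n) * (\<Sum>i<n. f i (T i x))"

definition objective_grad :: "'a \<Rightarrow> 'a" where
  "objective_grad x = (1 / real n) *\<^sub>R (\<Sum>i<n. shifted_grad i x)"

definition L_avg :: real where
  "L_avg = (1 / real n) * (\<Sum>i<n. (\<alpha> i)\<^sup>2 * L i)"

definition \<mu>_avg :: real where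
  "\<mu>_avg = (1 / real n) * (\<Sum>i<n. (\<alpha> i)\<^sup>2 * \<mu> i)"

lemma L_pos: "i < n \<Longrightarrow> 0 < L i"
  using strongly_convex_le_L_smooth[OF smooth sconv] mu_pos by (meson less_le_trans)

lemma shifted_L_smooth: "i < n \<Longrightarrow> L_smooth (\<lambda>x. f i (T i x)) (shifted_grad i) ((\<alpha> i)\<^sup>2 * L i)"
  unfolding T_def shifted_grad_def[abs_def] by (intro L_smooth_affine_compose smooth)

lemma shifted_strongly_convex:
  "i < n \<Longrightarrow> strongly_convex (\<lambda>x. f i (T i x)) (shifted_grad i) ((\<alpha> i)\<^sup>2 * \<mu> i)"
  unfolding T_def shifted_grad_def[abs_def] by (intro strongly_convex_affine_compose sconv)

lemma objective_L_smooth: "L_smooth objective objective_grad L_avg"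
proof -
  have "L_smooth (\<lambda>x. \<Sum>i<n. (1 / real n) * f i (T i x)) (\<lambda>x. \<Sum>i<n. (1 / real n) *\<^sub>R shifted_grad i x)
      (\<Sum>i<n. (1 / real n) * ((\<alpha> i)\<^sup>2 * L i))"
    by (intro L_smooth_weighted_sum shifted_L_smooth) auto
  then show ?thesis
    unfolding objective_def[abs_def] objective_grad_def[abs_def] L_avg_def
    by (simp add: sum_distrib_left scaleR_sum_right)
qed

lemma objective_strongly_convex: "strongly_convex objective objective_grad \<mu>_avg"
proof -
  have "strongly_convex (\<lambda>x. \<Sum>i<n. (1 / real n) * f i (T i x))
      (\<lambda>x. \<Sum>i<n. (1 / real n) *\<^sub>R shifted_grad i x) (\<Sum>i<n. (1 / real n) * ((\<alpha> i)\<^sup>2 * \<mu> i))"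
    by (intro strongly_convex_weighted_sum shifted_strongly_convex) auto
  then show ?thesis
    unfolding objective_def[abs_def] objective_grad_def[abs_def] \<mu>_avg_def
    by (simp add: sum_distrib_left scaleR_sum_right)
qed

lemma L_avg_pos: "0 < L_avg"
  unfolding L_avg_def using n_pos L_pos alpha_pos
  by (intro mult_pos_pos sum_pos) (auto simp: less_imp_neq[symmetric])

lemma \<mu>_avg_nonneg: "0 \<le> \<mu>_avg"
  unfolding \<mu>_avg_def using mu_pos by (intro mult_nonneg_nonneg sum_nonneg) (auto simp: less_imp_le)

lemma shifted_bregman_nonneg:
  "i < n \<Longrightarrow> 0 \<le> f i (T i x) - f i (T i y) - inner (shifted_grad i y) (x - y)"
  using shifted_strongly_convex[unfolded strongly_convex_def] mu_pos
  by (smt (verit) mult_nonneg_nonneg zero_le_power2 zero_le_divide_iff)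

lemma objective_grad_eq_0_at_minimum:
  assumes "\<And>y. objective xs \<le> objective y"
  shows "objective_grad xs = 0"
  using objective_L_smooth assms unfolding L_smooth_def by (blast intro: GDERIV_zero_at_minimum)

end

locale diana_problem = shifted_objective +
  fixes \<omega> \<beta> :: "nat \<Rightarrow> real" and \<gamma> :: real and xstar :: 'a
    and N :: "nat \<times> nat \<Rightarrow> 'b measure" and C :: "nat \<Rightarrow> nat \<Rightarrow> 'b \<Rightarrow> 'a \<Rightarrow> 'a"
  assumes xstar_min: "\<And>y. objective xstar \<le> objective y"
    and omega_nonneg: "\<And>i. i < n \<Longrightarrow> 0 \<le> \<omega> i"
    and beta_pos: "\<And>i. i < n \<Longrightarrow> 0 < \<beta> i"
    and beta_le: "\<And>i. i < n \<Longrightarrow> \<beta> i \<le> 1 / (\<omega> i + 1)"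
    and gamma_pos: "0 < \<gamma>"
    and gamma_le: "\<gamma> \<le> inverse (L_avg + 2 * Max ((\<lambda>i. L i * (\<alpha> i)\<^sup>2 * \<omega> i) ` {..<n}) / real n
      + 4 * Max ((\<lambda>i. \<beta> i * \<omega> i * L i * (\<alpha> i)\<^sup>2) ` {..<n}) / (real n * Min (\<beta> ` {..<n})))"
    and N_prob: "\<And>k i. prob_space (N (k, i))"
    and C_meas: "\<And>k i. (\<lambda>(b, x). C k i b x) \<in> borel_measurable (N (k, i) \<Otimes>\<^sub>M borel)"
    and C_unbiased: "\<And>k i. i < n \<Longrightarrow> unbiased_compressor (N (k, i)) (C k i) (\<omega> i)"
begin

definition \<beta>_min :: real where
  "\<beta>_min = Min (\<beta> ` {..<n})"

definition \<omega>L_max :: real where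
  "\<omega>L_max = Max ((\<lambda>i. L i * (\<alpha> i)\<^sup>2 * \<omega> i) ` {..<n})"

definition \<beta>\<omega>L_max :: real where
  "\<beta>\<omega>L_max = Max ((\<lambda>i. \<beta> i * \<omega> i * L i * (\<alpha> i)\<^sup>2) ` {..<n})"

definition h_star :: "nat \<Rightarrow> 'a" where
  "h_star i = shifted_grad i xstar"

definition sigma_sq :: "(nat \<Rightarrow> 'a) \<Rightarrow> real" where
  "sigma_sq h = (1 / real n) * (\<Sum>i<n. \<omega> i * (norm (h i - h_star i))\<^sup>2)"

definition potential_weight :: real where
  "potential_weight = 4 / (real n * \<beta>_min) * \<gamma>\<^sup>2"

definition potential :: "'a \<times> (nat \<Rightarrow> 'a) \<Rightarrow> real" where
  "potential s = (norm (fst s - xstar))\<^sup>2 + potential_weight * sigma_sq (snd s)"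

definition rate :: real where
  "rate = max (1 - \<gamma> * \<mu>_avg) (1 - \<beta>_min / 2)"

lemma \<beta>_min_le: "i < n \<Longrightarrow> \<beta>_min \<le> \<beta> i"
  unfolding \<beta>_min_def by (rule Min_le) auto

lemma \<beta>_min_pos: "0 < \<beta>_min"
  unfolding \<beta>_min_def using beta_pos n_pos by (subst Min_gr_iff) auto

lemma beta_mult_le_1: "i < n \<Longrightarrow> \<beta> i * (\<omega> i + 1) \<le> 1"
  using beta_le[of i] omega_nonneg[of i] by (simp add: add_nonneg_pos pos_le_divide_eq)

lemma beta_le_1: "i < n \<Longrightarrow> \<beta> i \<le> 1"
  using beta_mult_le_1[of i] beta_pos[of i] omega_nonneg[of i]
  by (smt (verit) mult_le_cancel_left1)

lemma rate_nonneg: "0 \<le> rate"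
  using \<beta>_min_le[OF n_pos] beta_le_1[OF n_pos] unfolding rate_def by linarith

lemma potential_weight_nonneg: "0 \<le> potential_weight"
  unfolding potential_weight_def using \<beta>_min_pos by simp

lemma sigma_sq_nonneg: "0 \<le> sigma_sq h"
  unfolding sigma_sq_def using omega_nonneg by (intro mult_nonneg_nonneg sum_nonneg) auto

lemma potential_nonneg: "0 \<le> potential s"
  unfolding potential_def using potential_weight_nonneg sigma_sq_nonneg by simp

lemma sum_h_star: "(\<Sum>i<n. h_star i) = 0"
  using objective_grad_eq_0_at_minimum[OF xstar_min] n_pos
  unfolding objective_grad_def h_star_def by simp

lemma step_size_condition:
  "\<gamma> * (L_avg + 2 * \<omega>L_max / real n + 4 * \<beta>\<omega>L_max / (real n * \<beta>_min)) \<le> 1"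
  using mult_le_1_of_le_inverse[OF gamma_pos gamma_le] unfolding \<omega>L_max_def \<beta>\<omega>L_max_def \<beta>_min_def .

lemma worker_contraction:
  fixes x h :: 'a
  assumes i: "i < n" and q: "0 \<le> q"
  defines "\<Delta> \<equiv> shifted_grad i x - h"
    and "D \<equiv> f i (T i x) - f i (T i xstar) - inner (h_star i) (x - xstar)"
  shows "q * \<beta>_min / 4 * \<omega> i * (norm \<Delta>)\<^sup>2
      + q * \<omega> i * ((norm (h - h_star i + \<beta> i *\<^sub>R \<Delta>))\<^sup>2 + (\<beta> i)\<^sup>2 * \<omega> i * (norm \<Delta>)\<^sup>2)
    \<le> q * (1 - \<beta>_min / 2) * \<omega> i * (norm (h - h_star i))\<^sup>2
      + (q * \<beta>_min * \<omega>L_max + 2 * q * \<beta>\<omega>L_max) * D"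
proof -
  define U where "U = (norm (h - h_star i))\<^sup>2"
  define V where "V = (norm (shifted_grad i x - h_star i))\<^sup>2"
  define Li where "Li = (\<alpha> i)\<^sup>2 * L i"
  have \<omega>: "0 \<le> \<omega> i" and \<beta>: "\<beta>_min \<le> \<beta> i"
    using omega_nonneg[OF i] \<beta>_min_le[OF i] by auto
  have qw: "0 \<le> q * \<omega> i" and qbw: "0 \<le> q * \<beta>_min / 4 * \<omega> i"
    using q \<omega> \<beta>_min_pos by auto
  have "\<Delta> = (shifted_grad i x - h_star i) - (h - h_star i)"
    unfolding \<Delta>_def by simp
  then have W: "(norm \<Delta>)\<^sup>2 \<le> 2 * V + 2 * U"
    unfolding U_def V_def using norm_diff_sq_le by metis
  have Q: "(norm (h - h_star i + \<beta> i *\<^sub>R \<Delta>))\<^sup>2 + (\<beta> i)\<^sup>2 * \<omega> i * (norm \<Delta>)\<^sup>2 \<le> (1 - \<beta> i) * U + \<beta> i * V"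
    using norm_sq_shift_update_le[of "\<beta> i" "\<omega> i" "h - h_star i" \<Delta>]
      beta_pos[OF i] beta_mult_le_1[OF i]
    unfolding U_def V_def \<Delta>_def by simp
  have V: "V \<le> 2 * Li * D"
    unfolding V_def Li_def D_def h_star_def
    using L_smooth_cocoercive[OF shifted_L_smooth[OF i] shifted_strongly_convex[OF i]]
      mu_pos[OF i] L_pos[OF i] alpha_pos[OF i] by simp
  have D: "0 \<le> D"
    unfolding D_def h_star_def by (rule shifted_bregman_nonneg[OF i])
  have A: "\<omega> i * Li \<le> \<omega>L_max" and B: "\<beta> i * \<omega> i * Li \<le> \<beta>\<omega>L_max"
    unfolding \<omega>L_max_def \<beta>\<omega>L_max_def Li_def using i
    by (auto intro!: Max.coboundedI simp: ac_simps)
  have "q * \<beta>_min / 4 * \<omega> i * (norm \<Delta>)\<^sup>2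
      + q * \<omega> i * ((norm (h - h_star i + \<beta> i *\<^sub>R \<Delta>))\<^sup>2 + (\<beta> i)\<^sup>2 * \<omega> i * (norm \<Delta>)\<^sup>2)
    \<le> q * \<beta>_min / 4 * \<omega> i * (2 * V + 2 * U) + q * \<omega> i * ((1 - \<beta> i) * U + \<beta> i * V)"
    using add_mono[OF mult_left_mono[OF W qbw] mult_left_mono[OF Q qw]] .
  also have "\<dots> = q * \<omega> i * U * (1 - (\<beta> i - \<beta>_min / 2)) + q * \<omega> i * V * (\<beta>_min / 2 + \<beta> i)"
    by (simp add: algebra_simps)
  also have "\<dots> \<le> q * \<omega> i * U * (1 - \<beta>_min / 2) + q * \<omega> i * (2 * Li * D) * (\<beta>_min / 2 + \<beta> i)"
    using \<beta> V qw \<beta>_min_pos beta_pos[OF i] unfolding U_def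
    by (intro add_mono mult_left_mono mult_right_mono) auto
  also have "\<dots> = q * (1 - \<beta>_min / 2) * \<omega> i * U
      + (q * \<beta>_min * (\<omega> i * Li) + 2 * q * (\<beta> i * \<omega> i * Li)) * D"
    by (simp add: algebra_simps)
  also have "\<dots> \<le> q * (1 - \<beta>_min / 2) * \<omega> i * U + (q * \<beta>_min * \<omega>L_max + 2 * q * \<beta>\<omega>L_max) * D"
    using A B D q \<beta>_min_pos by (intro add_left_mono mult_right_mono add_mono mult_left_mono) auto
  finally show ?thesis
    unfolding U_def .
qed

section \<open>Expected decrease of the potential\<close>

lemma prob_space_N: "prob_space (N p)"
  using N_prob by (cases p) auto

abbreviation iter :: "'a \<Rightarrow> (nat \<Rightarrow> 'a) \<Rightarrow> (nat \<times> nat \<Rightarrow> 'b) \<Rightarrow> nat \<Rightarrow> 'a \<times> (nat \<Rightarrow> 'a)" where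
  "iter x0 h0 w k \<equiv> diana n gf \<alpha> xm \<beta> \<gamma> C x0 h0 w k"

definition delta :: "'a \<times> (nat \<Rightarrow> 'a) \<Rightarrow> nat \<Rightarrow> 'a" where
  "delta s i = shifted_grad i (fst s) - snd s i"

definition step :: "nat \<Rightarrow> 'a \<times> (nat \<Rightarrow> 'a) \<Rightarrow> (nat \<Rightarrow> 'b) \<Rightarrow> 'a \<times> (nat \<Rightarrow> 'a)" where
  "step k s b = (fst s - \<gamma> *\<^sub>R ((1 / real n) *\<^sub>R (\<Sum>i<n. snd s i + C k i (b i) (delta s i))),
     \<lambda>i. snd s i + \<beta> i *\<^sub>R C k i (b i) (delta s i))"

lemma diana_Suc_eq_step: "iter x0 h0 w (Suc k) = step k (iter x0 h0 w k) (\<lambda>i. w (k, i))"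
  by (simp add: step_def delta_def shifted_grad_def T_def Let_def split: prod.split)

definition worker_term :: "'a \<times> (nat \<Rightarrow> 'a) \<Rightarrow> nat \<Rightarrow> real" where
  "worker_term s i = (\<gamma> / real n)\<^sup>2 * \<omega> i * (norm (delta s i))\<^sup>2
    + potential_weight / real n * \<omega> i
      * ((norm (snd s i - h_star i + \<beta> i *\<^sub>R delta s i))\<^sup>2 + (\<beta> i)\<^sup>2 * \<omega> i * (norm (delta s i))\<^sup>2)"

lemma worker_term_nonneg: "i < n \<Longrightarrow> 0 \<le> worker_term s i"
  unfolding worker_term_def using potential_weight_nonneg omega_nonneg[of i]
  by (intro add_nonneg_nonneg mult_nonneg_nonneg) auto

lemma sum_worker_term_le:
  "(\<Sum>i<n. worker_term s i) \<le> (1 - \<beta>_min / 2) * (potential_weight * sigma_sq (snd s))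
    + 2 * \<gamma>\<^sup>2 * (2 * \<omega>L_max / real n + 4 * \<beta>\<omega>L_max / (real n * \<beta>_min))
      * (objective (fst s) - objective xstar)"
proof -
  define q where "q = potential_weight / real n"
  define M where "M = q * \<beta>_min * \<omega>L_max + 2 * q * \<beta>\<omega>L_max"
  define D where
    "D i = f i (T i (fst s)) - f i (T i xstar) - inner (h_star i) (fst s - xstar)" for i
  have n: "0 < real n"
    using n_pos by simp
  have q: "0 \<le> q"
    unfolding q_def using potential_weight_nonneg by simp
  have pq: "(\<gamma> / real n)\<^sup>2 = q * \<beta>_min / 4"
    unfolding q_def potential_weight_def using n \<beta>_min_pos
    by (simp add: power2_eq_square field_simps)
  have "worker_term s i \<le> q * (1 - \<beta>_min / 2) * \<omega> i * (norm (snd s i - h_star i))\<^sup>2 + M * D i"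
    if "i < n" for i
    unfolding worker_term_def delta_def pq q_def[symmetric] M_def D_def
    by (rule worker_contraction[OF that q])
  then have "(\<Sum>i<n. worker_term s i)
      \<le> (\<Sum>i<n. q * (1 - \<beta>_min / 2) * \<omega> i * (norm (snd s i - h_star i))\<^sup>2 + M * D i)"
    by (intro sum_mono) simp
  also have "\<dots> = (1 - \<beta>_min / 2) * (potential_weight * sigma_sq (snd s)) + M * (\<Sum>i<n. D i)"
    unfolding sigma_sq_def q_def by (simp add: sum.distrib sum_distrib_left mult_ac)
  also have "(\<Sum>i<n. D i) = real n * (objective (fst s) - objective xstar)"
    using n unfolding D_def objective_def
    by (simp add: sum_subtractf sum_h_star right_diff_distrib flip: inner_sum_left)
  also have "M * (real n * (objective (fst s) - objective xstar))
      = 2 * \<gamma>\<^sup>2 * (2 * \<omega>L_max / real n + 4 * \<beta>\<omega>L_max / (real n * \<beta>_min))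
        * (objective (fst s) - objective xstar)"
    using n \<beta>_min_pos unfolding M_def q_def potential_weight_def
    by (simp add: power2_eq_square field_simps)
  finally show ?thesis .
qed

lemma potential_step_bound:
  "(norm (fst s - xstar - \<gamma> *\<^sub>R objective_grad (fst s)))\<^sup>2 + (\<Sum>i<n. worker_term s i)
    \<le> rate * potential s"
proof -
  define X where "X = (norm (fst s - xstar))\<^sup>2"
  define P where "P = potential_weight * sigma_sq (snd s)"
  define E where "E = objective (fst s) - objective xstar"
  define S where "S = 2 * \<omega>L_max / real n + 4 * \<beta>\<omega>L_max / (real n * \<beta>_min)"
  have "(norm (fst s - xstar - \<gamma> *\<^sub>R objective_grad (fst s)))\<^sup>2
      \<le> (1 - \<gamma> * \<mu>_avg) * X - 2 * \<gamma> * (1 - \<gamma> * L_avg) * E"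
    unfolding X_def E_def using gamma_pos
    by (intro gradient_step_bound objective_L_smooth objective_strongly_convex
        \<mu>_avg_nonneg L_avg_pos
        objective_grad_eq_0_at_minimum xstar_min) auto
  moreover have "(\<Sum>i<n. worker_term s i) \<le> (1 - \<beta>_min / 2) * P + 2 * \<gamma>\<^sup>2 * S * E"
    unfolding P_def S_def E_def by (rule sum_worker_term_le)
  moreover have "- 2 * \<gamma> * (1 - \<gamma> * L_avg) * E + 2 * \<gamma>\<^sup>2 * S * E
      = - 2 * \<gamma> * E * (1 - \<gamma> * (L_avg + S))"
    by (simp add: power2_eq_square algebra_simps)
  moreover have "\<gamma> * (L_avg + S) \<le> 1"
    using step_size_condition unfolding S_def by (simp add: add.assoc)
  then have "- 2 * \<gamma> * E * (1 - \<gamma> * (L_avg + S)) \<le> 0"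
    using gamma_pos xstar_min[of "fst s"] unfolding E_def by (intro mult_nonpos_nonneg) auto
  moreover have "(1 - \<gamma> * \<mu>_avg) * X + (1 - \<beta>_min / 2) * P \<le> rate * X + rate * P"
    unfolding rate_def X_def P_def using potential_weight_nonneg sigma_sq_nonneg
    by (intro add_mono mult_right_mono) auto
  ultimately have "(norm (fst s - xstar - \<gamma> *\<^sub>R objective_grad (fst s)))\<^sup>2 + (\<Sum>i<n. worker_term s i)
      \<le> rate * X + rate * P"
    by linarith
  then show ?thesis
    unfolding potential_def X_def P_def by (simp add: distrib_left)
qed

lemma C_measurable: "i < n \<Longrightarrow> (\<lambda>b. C k i b d) \<in> borel_measurable (N (k, i))"
  using C_unbiased unfolding unbiased_compressor_def by (simp add: borel_measurable_integrable)

lemma potential_step_eq: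
  "potential (step k s b)
    = (norm (fst s - xstar - \<gamma> *\<^sub>R objective_grad (fst s)
        + (\<Sum>i<n. (- (\<gamma> / real n)) *\<^sub>R (C k i (b i) (delta s i) - delta s i))))\<^sup>2
      + (\<Sum>i<n. potential_weight / real n * \<omega> i
          * (norm (snd s i - h_star i + \<beta> i *\<^sub>R C k i (b i) (delta s i)))\<^sup>2)"
proof -
  have x: "fst (step k s b) - xstar = fst s - xstar - \<gamma> *\<^sub>R objective_grad (fst s)
      + (\<Sum>i<n. (- (\<gamma> / real n)) *\<^sub>R (C k i (b i) (delta s i) - delta s i))"
    unfolding step_def objective_grad_def delta_def
    by (simp add: scaleR_sum_right sum.distrib sum_subtractf algebra_simps)
  have h: "potential_weight * sigma_sq (snd (step k s b)) = (\<Sum>i<n. potential_weight / real n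
      * \<omega> i * (norm (snd s i - h_star i + \<beta> i *\<^sub>R C k i (b i) (delta s i)))\<^sup>2)"
    unfolding sigma_sq_def step_def by (simp add: sum_distrib_left algebra_simps)
  show ?thesis
    unfolding potential_def by (simp only: x h)
qed

lemma expected_worker_term_le:
  assumes i: "i < n"
  shows "(\<integral>\<^sup>+b. ennreal ((norm ((- (\<gamma> / real n)) *\<^sub>R (C k i b (delta s i) - delta s i)))\<^sup>2) \<partial>N (k, i))
      + (\<integral>\<^sup>+b. ennreal (potential_weight / real n * \<omega> i
          * (norm (snd s i - h_star i + \<beta> i *\<^sub>R C k i b (delta s i)))\<^sup>2) \<partial>N (k, i))
    \<le> ennreal (worker_term s i)"
proof -
  define w where "w = potential_weight / real n * \<omega> i"
  define u where "u = snd s i - h_star i"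
  have w: "0 \<le> w"
    unfolding w_def using potential_weight_nonneg omega_nonneg[OF i] by simp
  have [measurable]: "(\<lambda>b. C k i b (delta s i)) \<in> borel_measurable (N (k, i))"
    using C_measurable[OF i] .
  have Z: "(\<integral>\<^sup>+b. ennreal ((norm ((- (\<gamma> / real n)) *\<^sub>R (C k i b (delta s i) - delta s i)))\<^sup>2)
      \<partial>N (k, i))
      \<le> ennreal ((- (\<gamma> / real n))\<^sup>2 * (\<omega> i * (norm (delta s i))\<^sup>2))"
    by (rule unbiased_compressor_error(3)[OF N_prob C_unbiased[OF i]])
  have "(\<integral>\<^sup>+b. ennreal (w * (norm (u + \<beta> i *\<^sub>R C k i b (delta s i)))\<^sup>2) \<partial>N (k, i))
      = ennreal w * (\<integral>\<^sup>+b. ennreal ((norm (u + \<beta> i *\<^sub>R C k i b (delta s i)))\<^sup>2) \<partial>N (k, i))"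
    unfolding ennreal_mult'[OF w] by (rule nn_integral_cmult) simp
  also have "\<dots> \<le> ennreal w
      * ennreal ((norm (u + \<beta> i *\<^sub>R delta s i))\<^sup>2 + (\<beta> i)\<^sup>2 * (\<omega> i * (norm (delta s i))\<^sup>2))"
    using unbiased_compressor_update_sq[OF N_prob C_unbiased[OF i] omega_nonneg[OF i]]
    by (rule mult_left_mono) simp
  finally have \<psi>: "(\<integral>\<^sup>+b. ennreal (w * (norm (u + \<beta> i *\<^sub>R C k i b (delta s i)))\<^sup>2) \<partial>N (k, i))
      \<le> ennreal (w * ((norm (u + \<beta> i *\<^sub>R delta s i))\<^sup>2 + (\<beta> i)\<^sup>2 * (\<omega> i * (norm (delta s i))\<^sup>2)))"
    unfolding ennreal_mult'[OF w] .
  have "worker_term s i = (- (\<gamma> / real n))\<^sup>2 * (\<omega> i * (norm (delta s i))\<^sup>2)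
      + w * ((norm (u + \<beta> i *\<^sub>R delta s i))\<^sup>2 + (\<beta> i)\<^sup>2 * (\<omega> i * (norm (delta s i))\<^sup>2))"
    unfolding worker_term_def w_def u_def by (simp add: mult_ac)
  then have "ennreal (worker_term s i) = ennreal ((- (\<gamma> / real n))\<^sup>2 * (\<omega> i * (norm (delta s i))\<^sup>2))
      + ennreal (w * ((norm (u + \<beta> i *\<^sub>R delta s i))\<^sup>2 + (\<beta> i)\<^sup>2 * (\<omega> i * (norm (delta s i))\<^sup>2)))"
    using w omega_nonneg[OF i] by (simp add: ennreal_plus)
  with add_mono[OF Z \<psi>] show ?thesis
    unfolding w_def u_def by simp
qed

lemma expected_potential_step:
  "(\<integral>\<^sup>+y. ennreal (potential (step k s (\<lambda>i. y (k, i)))) \<partial>PiM ({k} \<times> {..<n}) N)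
    \<le> ennreal (rate * potential s)"
proof -
  define R where "R = {k} \<times> {..<n}"
  define Z :: "nat \<times> nat \<Rightarrow> 'b \<Rightarrow> 'a" where
    "Z p b = (- (\<gamma> / real n)) *\<^sub>R (C k (snd p) b (delta s (snd p)) - delta s (snd p))" for p b
  define \<psi> :: "nat \<times> nat \<Rightarrow> 'b \<Rightarrow> real" where
    "\<psi> p b = potential_weight / real n * \<omega> (snd p)
      * (norm (snd s (snd p) - h_star (snd p) + \<beta> (snd p) *\<^sub>R C k (snd p) b (delta s (snd p))))\<^sup>2"
    for p b
  define a where "a = fst s - xstar - \<gamma> *\<^sub>R objective_grad (fst s)"
  have sum_R: "(\<Sum>p\<in>R. g p) = (\<Sum>i<n. g (k, i))" for g :: "nat \<times> nat \<Rightarrow> 'z::comm_monoid_add"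
  proof -
    have "R = Pair k ` {..<n}"
      unfolding R_def by auto
    then show ?thesis
      by (simp add: sum.reindex inj_on_def)
  qed
  have R: "p \<in> R \<Longrightarrow> \<exists>i<n. p = (k, i)" for p
    unfolding R_def by auto
  note err = unbiased_compressor_error[OF N_prob C_unbiased]
  have "(\<integral>\<^sup>+y. ennreal (potential (step k s (\<lambda>i. y (k, i)))) \<partial>PiM R N)
      = (\<integral>\<^sup>+y. ennreal ((norm (a + (\<Sum>p\<in>R. Z p (y p))))\<^sup>2 + (\<Sum>p\<in>R. \<psi> p (y p))) \<partial>PiM R N)"
    unfolding potential_step_eq sum_R Z_def \<psi>_def a_def by simp
  also have "\<dots> = ennreal ((norm a)\<^sup>2)
      + (\<Sum>p\<in>R. (\<integral>\<^sup>+b. ennreal ((norm (Z p b))\<^sup>2) \<partial>N p) + (\<integral>\<^sup>+b. ennreal (\<psi> p b) \<partial>N p))"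
  proof (rule nn_integral_PiM_norm_sq_sum_mean_zero[OF prob_space_N])
    fix p assume "p \<in> R"
    then obtain i where p: "p = (k, i)" and i: "i < n"
      using R by blast
    show "integrable (N p) (Z p)"
      unfolding p Z_def snd_conv by (rule err(1)[OF i])
    show "(\<integral>b. Z p b \<partial>N p) = 0"
      unfolding p Z_def snd_conv by (rule err(2)[OF i])
    show "integrable (N p) (\<lambda>b. (norm (Z p b))\<^sup>2)"
      unfolding p Z_def snd_conv by (rule err(4)[OF i])
    show "\<psi> p \<in> borel_measurable (N p)"
      using C_measurable[OF i] unfolding p \<psi>_def snd_conv by measurable
    show "0 \<le> \<psi> p b" for b
      unfolding p \<psi>_def snd_conv using potential_weight_nonneg omega_nonneg[OF i] by simp
  qed (simp add: R_def)
  also have "\<dots> \<le> ennreal ((norm a)\<^sup>2) + (\<Sum>i<n. ennreal (worker_term s i))"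
    unfolding sum_R Z_def \<psi>_def snd_conv
    by (intro add_left_mono sum_mono expected_worker_term_le) simp
  also have "\<dots> = ennreal ((norm a)\<^sup>2 + (\<Sum>i<n. worker_term s i))"
  proof -
    have "(\<Sum>i<n. ennreal (worker_term s i)) = ennreal (\<Sum>i<n. worker_term s i)"
      by (rule sum_ennreal) (simp add: worker_term_nonneg)
    moreover have "0 \<le> (\<Sum>i<n. worker_term s i)"
      by (rule sum_nonneg) (simp add: worker_term_nonneg)
    ultimately show ?thesis
      by (simp add: ennreal_plus)
  qed
  also have "\<dots> \<le> ennreal (rate * potential s)"
    unfolding a_def by (intro ennreal_leI potential_step_bound)
  finally show ?thesis
    unfolding R_def .
qed

text \<open>Shifts h i with i \<ge> n never influence the iterates but depend on further samples, so
  states are only compared on the n workers.\<close>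

definition same_state :: "'a \<times> (nat \<Rightarrow> 'a) \<Rightarrow> 'a \<times> (nat \<Rightarrow> 'a) \<Rightarrow> bool" where
  "same_state s s' \<longleftrightarrow> fst s = fst s' \<and> (\<forall>i<n. snd s i = snd s' i)"

lemma step_cong:
  assumes "same_state s s'" and "\<And>i. i < n \<Longrightarrow> b i = b' i"
  shows "same_state (step k s b) (step k s' b')"
proof -
  have "delta s i = delta s' i" if "i < n" for i
    using assms that unfolding same_state_def delta_def by simp
  then show ?thesis
    using assms unfolding same_state_def step_def by (auto intro!: sum.cong)
qed

lemma potential_cong: "same_state s s' \<Longrightarrow> potential s = potential s'"
  unfolding same_state_def potential_def sigma_sq_def by (auto intro!: sum.cong)

lemma iter_same_state:
  assumes "\<And>p. p \<in> {..<k} \<times> {..<n} \<Longrightarrow> w p = w' p"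
  shows "same_state (iter x0 h0 w k) (iter x0 h0 w' k)"
  using assms
proof (induction k)
  case 0
  show ?case
    by (simp add: same_state_def)
next
  case (Suc k)
  then show ?case
    unfolding diana_Suc_eq_step by (intro step_cong) auto
qed

lemma gf_measurable:
  assumes "i < n"
  shows "gf i \<in> borel_measurable borel"
proof -
  have "(L i)-lipschitz_on UNIV (gf i)"
    using smooth[OF assms] L_pos[OF assms] unfolding L_smooth_def
    by (intro lipschitz_onI) (auto simp: dist_norm)
  then show ?thesis
    by (intro borel_measurable_continuous_onI lipschitz_on_continuous_on)
qed

lemma iter_measurable:
  assumes "{..<k} \<times> {..<n} \<subseteq> J"
  shows "(\<lambda>w. fst (iter x0 h0 w k)) \<in> borel_measurable (PiM J N)
    \<and> (\<forall>i<n. (\<lambda>w. snd (iter x0 h0 w k) i) \<in> borel_measurable (PiM J N))"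
  using assms
proof (induction k)
  case (Suc k)
  have kJ: "(k, i) \<in> J" if "i < n" for i
    using Suc.prems that by auto
  have "{..<k} \<times> {..<n} \<subseteq> J"
    using Suc.prems by auto
  then have IH: "(\<lambda>w. fst (iter x0 h0 w k)) \<in> borel_measurable (PiM J N)"
    "\<And>i. i < n \<Longrightarrow> (\<lambda>w. snd (iter x0 h0 w k) i) \<in> borel_measurable (PiM J N)"
    using Suc.IH by auto
  have \<Delta>: "(\<lambda>w. delta (iter x0 h0 w k) i) \<in> borel_measurable (PiM J N)" if "i < n" for i
    unfolding delta_def shifted_grad_def T_def using IH that
    by (intro borel_measurable_diff borel_measurable_scaleR borel_measurable_const
        measurable_compose[OF _ gf_measurable] borel_measurable_add) auto
  have "(\<lambda>w. C k i (w (k, i)) (delta (iter x0 h0 w k) i)) \<in> borel_measurable (PiM J N)"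
    if "i < n" for i
  proof -
    have "(\<lambda>w. (w (k, i), delta (iter x0 h0 w k) i)) \<in> measurable (PiM J N) (N (k, i) \<Otimes>\<^sub>M borel)"
      using kJ[OF that] \<Delta>[OF that] by (intro measurable_Pair measurable_component_singleton)
    from measurable_compose[OF this C_meas] show ?thesis
      by simp
  qed
  then show ?case
    unfolding diana_Suc_eq_step step_def fst_conv snd_conv using IH
    by (auto intro!: borel_measurable_diff borel_measurable_scaleR borel_measurable_sum
        borel_measurable_add)
qed simp

lemma potential_iter_measurable:
  "{..<k} \<times> {..<n} \<subseteq> J \<Longrightarrow> (\<lambda>w. potential (iter x0 h0 w k)) \<in> borel_measurable (PiM J N)"
  unfolding potential_def sigma_sq_def using iter_measurable[of k J]
  by (intro borel_measurable_add borel_measurable_times borel_measurable_const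
      borel_measurable_power borel_measurable_sum borel_measurable_diff
      measurable_compose[OF _ borel_measurable_norm]) auto

lemma product_prob_space_N: "product_prob_space N"
  using prob_space_N by (simp add: product_prob_space_def product_prob_space_axioms_def
      product_sigma_finite_def prob_space_imp_sigma_finite)

lemma nn_integral_potential_restrict:
  assumes "finite J" and J: "{..<k} \<times> {..<n} \<subseteq> J"
  shows "(\<integral>\<^sup>+w. ennreal (potential (iter x0 h0 w k)) \<partial>PiM UNIV N)
    = (\<integral>\<^sup>+w. ennreal (potential (iter x0 h0 w k)) \<partial>PiM J N)"
proof -
  interpret product_prob_space N UNIV
    by (rule product_prob_space_N)
  have "(\<integral>\<^sup>+w. ennreal (potential (iter x0 h0 w k)) \<partial>PiM J N)
      = (\<integral>\<^sup>+w. ennreal (potential (iter x0 h0 w k))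
          \<partial>distr (PiM UNIV N) (PiM J N) (\<lambda>w. restrict w J))"
    using distr_PiM_restrict_finite[of J] \<open>finite J\<close> by simp
  also have "\<dots> = (\<integral>\<^sup>+w. ennreal (potential (iter x0 h0 (restrict w J) k)) \<partial>PiM UNIV N)"
    using potential_iter_measurable[OF J]
    by (intro nn_integral_distr measurable_restrict_subset) auto
  also have "\<dots> = (\<integral>\<^sup>+w. ennreal (potential (iter x0 h0 w k)) \<partial>PiM UNIV N)"
    using J
    by (intro nn_integral_cong arg_cong[where f = ennreal] potential_cong iter_same_state) auto
  finally show ?thesis ..
qed

lemma expected_potential_Suc:
  "(\<integral>\<^sup>+w. ennreal (potential (iter x0 h0 w (Suc k))) \<partial>PiM UNIV N)
    \<le> ennreal rate * (\<integral>\<^sup>+w. ennreal (potential (iter x0 h0 w k)) \<partial>PiM UNIV N)"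
proof -
  interpret product_prob_space N UNIV
    by (rule product_prob_space_N)
  define P where "P = {..<k} \<times> {..<n}"
  define R where "R = {k} \<times> {..<n}"
  have PR: "P \<inter> R = {}" "finite P" "finite R" "P \<union> R = {..<Suc k} \<times> {..<n}"
    unfolding P_def R_def by (auto simp: less_Suc_eq)
  have merge:
    "same_state (iter x0 h0 (merge P R (v, y)) (Suc k)) (step k (iter x0 h0 v k) (\<lambda>i. y (k, i)))"
    for v y
    unfolding diana_Suc_eq_step
    by (intro step_cong iter_same_state) (auto simp: merge_def P_def R_def)
  have "(\<integral>\<^sup>+w. ennreal (potential (iter x0 h0 w (Suc k))) \<partial>PiM UNIV N)
      = (\<integral>\<^sup>+w. ennreal (potential (iter x0 h0 w (Suc k))) \<partial>PiM (P \<union> R) N)"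
    using PR by (intro nn_integral_potential_restrict) auto
  also have "\<dots> = (\<integral>\<^sup>+v. (\<integral>\<^sup>+y. ennreal (potential (iter x0 h0 (merge P R (v, y)) (Suc k)))
      \<partial>PiM R N) \<partial>PiM P N)"
    using PR potential_iter_measurable[of "Suc k" "P \<union> R"]
    by (intro product_nn_integral_fold) auto
  also have "\<dots> = (\<integral>\<^sup>+v. (\<integral>\<^sup>+y. ennreal (potential (step k (iter x0 h0 v k) (\<lambda>i. y (k, i))))
      \<partial>PiM R N) \<partial>PiM P N)"
    by (simp only: potential_cong[OF merge])
  also have "\<dots> \<le> (\<integral>\<^sup>+v. ennreal rate * ennreal (potential (iter x0 h0 v k)) \<partial>PiM P N)"
    unfolding R_def using expected_potential_step rate_nonneg
    by (intro nn_integral_mono) (simp add: ennreal_mult')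
  also have "\<dots> = ennreal rate * (\<integral>\<^sup>+v. ennreal (potential (iter x0 h0 v k)) \<partial>PiM P N)"
    using potential_iter_measurable[of k P] by (intro nn_integral_cmult) (auto simp: P_def)
  also have "(\<integral>\<^sup>+v. ennreal (potential (iter x0 h0 v k)) \<partial>PiM P N)
      = (\<integral>\<^sup>+w. ennreal (potential (iter x0 h0 w k)) \<partial>PiM UNIV N)"
    using PR by (intro nn_integral_potential_restrict[symmetric]) (auto simp: P_def)
  finally show ?thesis .
qed

lemma expected_potential_le:
  "(\<integral>\<^sup>+w. ennreal (potential (iter x0 h0 w k)) \<partial>PiM UNIV N)
    \<le> ennreal (rate ^ k * potential (x0, h0))"
proof (induction k)
  case 0
  interpret product_prob_space N UNIV
    by (rule product_prob_space_N)
  show ?case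
    by (simp add: emeasure_space_1)
next
  case (Suc k)
  have "(\<integral>\<^sup>+w. ennreal (potential (iter x0 h0 w (Suc k))) \<partial>PiM UNIV N)
      \<le> ennreal rate * ennreal (rate ^ k * potential (x0, h0))"
    using expected_potential_Suc Suc.IH by (rule order_trans[OF _ mult_left_mono]) simp
  also have "\<dots> = ennreal (rate ^ Suc k * potential (x0, h0))"
    using rate_nonneg by (simp add: ennreal_mult'[symmetric] mult.assoc)
  finally show ?case .
qed

lemma expected_potential_linear_convergence:
  "(\<integral>\<^sup>+w. ennreal (potential (iter x0 h0 w k)) \<partial>PiM UNIV N)
    \<le> ennreal (max ((1 - \<gamma> * \<mu>_avg) ^ k) ((1 - \<beta>_min / 2) ^ k) * potential (x0, h0))"
proof -
  have "rate ^ k \<le> max ((1 - \<gamma> * \<mu>_avg) ^ k) ((1 - \<beta>_min / 2) ^ k)"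
    unfolding rate_def by (cases "1 - \<gamma> * \<mu>_avg \<le> 1 - \<beta>_min / 2") (auto simp: max_def)
  then have "rate ^ k * potential (x0, h0)
      \<le> max ((1 - \<gamma> * \<mu>_avg) ^ k) ((1 - \<beta>_min / 2) ^ k) * potential (x0, h0)"
    using potential_nonneg by (rule mult_right_mono)
  with expected_potential_le show ?thesis
    by (rule order_trans[OF _ ennreal_leI])
qed

end

theorem theorem4:
  fixes n :: nat
    and f :: "nat \<Rightarrow> 'a::euclidean_space \<Rightarrow> real" and gf :: "nat \<Rightarrow> 'a \<Rightarrow> 'a"
    and L \<mu> \<alpha> \<omega> \<beta> :: "nat \<Rightarrow> real" and \<gamma> :: real
    and xm :: "nat \<Rightarrow> 'a" and xstar x0 :: 'a and h0 :: "nat \<Rightarrow> 'a"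
    and N :: "nat \<times> nat \<Rightarrow> 'b measure" and C :: "nat \<Rightarrow> nat \<Rightarrow> 'b \<Rightarrow> 'a \<Rightarrow> 'a"
  assumes n_pos: "n \<ge> 1"
    and smooth: "\<forall>i<n. L_smooth (f i) (gf i) (L i)"
    and sconv: "\<forall>i<n. 0 < \<mu> i \<and> strongly_convex (f i) (gf i) (\<mu> i)"
    and xm_min: "\<forall>i<n. \<forall>y. f i (xm i) \<le> f i y"
    and alpha: "\<forall>i<n. 0 < \<alpha> i \<and> \<alpha> i < 1"
    and xstar_min: "\<forall>y. (1 / real n) * (\<Sum>i<n. f i (\<alpha> i *\<^sub>R xstar + (1 - \<alpha> i) *\<^sub>R xm i))
                      \<le> (1 / real n) * (\<Sum>i<n. f i (\<alpha> i *\<^sub>R y + (1 - \<alpha> i) *\<^sub>R xm i))"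
    and omega: "\<forall>i<n. 0 \<le> \<omega> i"
    and beta: "\<forall>i<n. 0 < \<beta> i \<and> \<beta> i \<le> 1 / (\<omega> i + 1)"
    and N_prob: "\<forall>k i. prob_space (N (k, i))"
    and C_meas: "\<forall>k i. (\<lambda>(b, x). C k i b x) \<in> borel_measurable (N (k, i) \<Otimes>\<^sub>M borel)"
    and C_class: "\<forall>k. \<forall>i<n. unbiased_compressor (N (k, i)) (C k i) (\<omega> i)"
    and gamma_pos: "0 < \<gamma>"
    and gamma_le: "\<gamma> \<le> inverse ((1 / real n) * (\<Sum>i<n. (\<alpha> i)\<^sup>2 * L i)
                     + 2 * Max ((\<lambda>i. L i * (\<alpha> i)\<^sup>2 * \<omega> i) ` {..<n}) / real n
                     + 4 * Max ((\<lambda>i. \<beta> i * \<omega> i * L i * (\<alpha> i)\<^sup>2) ` {..<n})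
                         / (real n * Min (\<beta> ` {..<n})))"
  shows "\<forall>k. (\<integral>\<^sup>+ w. ennreal
             (let (x, h) = diana n gf \<alpha> xm \<beta> \<gamma> C x0 h0 w k in
                (norm (x - xstar))\<^sup>2 + 4 / (real n * Min (\<beta> ` {..<n})) * \<gamma>\<^sup>2 *
                  ((1 / real n) * (\<Sum>i<n. \<omega> i * (norm (h i - \<alpha> i *\<^sub>R gf i (\<alpha> i *\<^sub>R xstar + (1 - \<alpha> i) *\<^sub>R xm i)))\<^sup>2)))
           \<partial>(PiM UNIV N))
         \<le> ennreal (max ((1 - \<gamma> * ((1 / real n) * (\<Sum>i<n. (\<alpha> i)\<^sup>2 * \<mu> i))) ^ k)
                        ((1 - Min (\<beta> ` {..<n}) / 2) ^ k)
                   * ((norm (x0 - xstar))\<^sup>2 + 4 / (real n * Min (\<beta> ` {..<n})) * \<gamma>\<^sup>2 *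
                      ((1 / real n) * (\<Sum>i<n. \<omega> i * (norm (h0 i - \<alpha> i *\<^sub>R gf i (\<alpha> i *\<^sub>R xstar + (1 - \<alpha> i) *\<^sub>R xm i)))\<^sup>2))))"
proof -
  interpret shifted_objective n f gf L \<mu> \<alpha> xm
    using n_pos smooth sconv alpha by unfold_locales auto
  interpret diana_problem n f gf L \<mu> \<alpha> xm \<omega> \<beta> \<gamma> xstar N C
  proof (rule diana_problem.intro[OF shifted_objective_axioms diana_problem_axioms.intro])
    show "objective xstar \<le> objective y" for y
      using xstar_min unfolding objective_def T_def by blast
    show "\<gamma> \<le> inverse (L_avg + 2 * Max ((\<lambda>i. L i * (\<alpha> i)\<^sup>2 * \<omega> i) ` {..<n}) / real n
        + 4 * Max ((\<lambda>i. \<beta> i * \<omega> i * L i * (\<alpha> i)\<^sup>2) ` {..<n}) / (real n * Min (\<beta> ` {..<n})))"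
      using gamma_le unfolding L_avg_def .
  qed (use omega beta N_prob C_meas C_class gamma_pos in simp_all)
  have potential_eq: "potential s = (let (x, h) = s in
      (norm (x - xstar))\<^sup>2 + 4 / (real n * Min (\<beta> ` {..<n})) * \<gamma>\<^sup>2 *
      ((1 / real n) * (\<Sum>i<n. \<omega> i
        * (norm (h i - \<alpha> i *\<^sub>R gf i (\<alpha> i *\<^sub>R xstar + (1 - \<alpha> i) *\<^sub>R xm i)))\<^sup>2)))"
    for s
    by (simp add: potential_def sigma_sq_def potential_weight_def h_star_def shifted_grad_def T_def
        \<beta>_min_def split_def)
  show ?thesis
    using expected_potential_linear_convergence[of x0 h0]
    unfolding potential_eq \<mu>_avg_def \<beta>_min_def by simp
qed

end
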